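(* Let $\beta_{ij}$ ($i\neq j$, $i,j=1,\dots,N$) be smooth functions of $\boldsymbol u=(u_1,\dots,u_N)$ satisfying the Lamé equations $$\frac{\partial\beta_{ij}}{\partial u_k}=\beta_{ik}\beta_{kj}\ (i,j,k \text{ distinct}),\qquad \frac{\partial\beta_{ij}}{\partial u_i}+\frac{\partial\beta_{ji}}{\partial u_j}+\sum_{k\neq i,j}\beta_{ki}\beta_{kj}=0\ (i\neq j).$$ Let $\boldsymbol\xi_i$ ($\mathbb R^M$-valued) and $\boldsymbol\zeta_i$ ($\mathbb R^L$-valued) satisfy $\frac{\partial\boldsymbol\xi_j}{\partial u_i}=\beta_{ji}\boldsymbol\xi_i$, $\frac{\partial\boldsymbol\zeta_j}{\partial u_i}=\beta_{ji}\boldsymbol\zeta_i$ for $i\neq j$, and set $\boldsymbol\xi^*_i=\big(\frac{\partial\boldsymbol\xi_i}{\partial u_i}+\sum_{k\neq i}\boldsymbol\xi_k\beta_{ki}\big)^{T}$, $\boldsymbol\zeta^*_i=\big(\frac{\partial\boldsymbol\zeta_i}{\partial u_i}+\sum_{k\neq i}\boldsymbol\zeta_k\beta_{ki}\big)^{T}$. Let $\Omega(\boldsymbol\xi,\boldsymbol\xi^* )$ ($M\times M$), $\Omega(\boldsymbol\xi,\boldsymbol\zeta^* )$ ($M\times L$), $\Omega(\boldsymbol\zeta,\boldsymbol\xi^* )$ ($L\times M$) be matrix functions with $\partial_{u_i}\Omega(\boldsymbol a,\boldsymbol b^* )=\boldsymbol a_i\boldsymbol b^*_i$ for all $i$ (for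 each of the three pairs $(\boldsymbol a,\boldsymbol b)$), such that $\Omega(\boldsymbol\xi,\boldsymbol\xi^* )$ is invertible and $$\Omega(\boldsymbol\xi,\boldsymbol\zeta^* )+\Omega(\boldsymbol\zeta,\boldsymbol\xi^* )^{T}=\sum_{k=1}^N\boldsymbol\xi_k\boldsymbol\zeta_k^{T},\qquad \Omega(\boldsymbol\xi,\boldsymbol\xi^* )+\Omega(\boldsymbol\xi,\boldsymbol\xi^* )^{T}=\sum_{k=1}^N\boldsymbol\xi_k\boldsymbol\xi_k^{T}.$$ Define $$\hat\beta_{ij}=\beta_{ij}-\boldsymbol\xi^*_j\,\Omega(\boldsymbol\xi,\boldsymbol\xi^* )^{-1}\boldsymbol\xi_i,\quad \hat{\boldsymbol\zeta}_i=\boldsymbol\zeta_i-\Omega(\boldsymbol\zeta,\boldsymbol\xi^* )\Omega(\boldsymbol\xi,\boldsymbol\xi^* )^{-1}\boldsymbol\xi_i,\quad \hat{\boldsymbol\zeta}^*_i=\boldsymbol\zeta^*_i-\boldsymbol\xi^*_i\,\Omega(\boldsymbol\xi,\boldsymbol\xi^* )^{-1}\Omega(\boldsymbol\xi,\boldsymbol\zeta^* ).$$ Then for every $i=1,\dots,N$, $$\hat{\boldsymbol\zeta}^*_i=\Big(\frac{\partial\hat{\boldsymbol\zeta}_i}{\partial u_i}+\sum_{k\neq i}\hat{\boldsymbol\zeta}_k\hat\beta_{ki}\Big)^{T}.$$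
   Context: Vectors are columns, starred quantities are row vectors, ${}^T$ is transpose, and $\boldsymbol a_i\boldsymbol b^*_i$ is the outer (column times row) product. All functions are smooth on an open domain of $\mathbb R^N$. *)

theory Defs
  imports "HOL-Analysis.Analysis"
begin

definition pd :: "(real^'n \<Rightarrow> 'a::real_normed_vector) \<Rightarrow> 'n \<Rightarrow> real^'n \<Rightarrow> 'a" where
  "pd f i u = frechet_derivative f (at u) (axis i 1)"

fun Ck :: "nat \<Rightarrow> (real^'n) set \<Rightarrow> (real^'n \<Rightarrow> 'a::real_normed_vector) \<Rightarrow> bool" where
  "Ck 0 U f = continuous_on U f"
| "Ck (Suc k) U f = (f differentiable_on U \<and> (\<forall>i. Ck k U (pd f i)))"

definition smooth_on :: "(real^'n) set \<Rightarrow> (real^'n \<Rightarrow> 'a::real_normed_vector) \<Rightarrow> bool" where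
  "smooth_on U f = (\<forall>k. Ck k U f)"

definition outer :: "real^'r \<Rightarrow> real^'c \<Rightarrow> real^'c^'r" where
  "outer a b = (\<chi> r c. a $ r * b $ c)"

text \<open>The starred quantity a^*_i, stored as a column vector (i.e. its transpose):
  a^*_i = (d a_i / d u_i + sum_{k ~= i} a_k beta_{ki})^T.\<close>
definition starv :: "('n \<Rightarrow> 'n \<Rightarrow> real^'n \<Rightarrow> real) \<Rightarrow> ('n \<Rightarrow> real^'n \<Rightarrow> real^'m)
    \<Rightarrow> 'n \<Rightarrow> real^'n \<Rightarrow> real^'m" where
  "starv \<beta> a i u = pd (a i) i u + (\<Sum>k\<in>UNIV - {i}. \<beta> k i u *\<^sub>R a k u)"

end

theory Submission
  imports Defs
begin

text \<open>
  Only differentiability, the formula for \<open>\<partial>\<Omega>(\<xi>,\<xi>\<^sup>*)/\<partial>u\<^sub>i\<close> and the two symmetry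
  relations are needed.

  Put \<open>P = \<Omega>(\<xi>,\<xi>\<^sup>*)\<^sup>-\<^sup>1\<close> and \<open>w = P \<xi>\<^sub>i\<close>, differentiable by Cramer's rule.
  Differentiating \<open>\<Omega>(\<xi>,\<xi>\<^sup>*) w = \<xi>\<^sub>i\<close> gives \<open>\<partial>\<^sub>i w = P (\<partial>\<^sub>i \<xi>\<^sub>i - \<xi>\<^sub>i \<xi>\<^sup>*\<^sub>i w)\<close>, hence
  \<open>\<partial>\<^sub>i \<zeta>'\<^sub>i = \<partial>\<^sub>i \<zeta>\<^sub>i - \<Omega>(\<zeta>,\<xi>\<^sup>*) \<partial>\<^sub>i w - \<zeta>\<^sub>i \<xi>\<^sup>*\<^sub>i w\<close>, where \<open>\<zeta>'\<close> is the transformed \<open>\<zeta>\<close>.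
  Eliminating \<open>\<partial>\<^sub>i \<xi>\<^sub>i\<close> and \<open>\<partial>\<^sub>i \<zeta>\<^sub>i\<close> through the definitions of \<open>\<xi>\<^sup>*\<^sub>i\<close> and \<open>\<zeta>\<^sup>*\<^sub>i\<close>,
  the claim becomes an identity for a sum over all \<open>k\<close>, including \<open>k = i\<close>:
  \<open>\<Sum>\<^sub>k (\<xi>\<^sup>*\<^sub>i P \<xi>\<^sub>k) \<zeta>'\<^sub>k = \<xi>\<^sup>*\<^sub>i P \<Omega>(\<xi>,\<zeta>\<^sup>*) - \<Omega>(\<zeta>,\<xi>\<^sup>*) P \<xi>\<^sup>*\<^sub>i\<^sup>T\<close>.
  The sums on the left are products with \<open>\<Sum>\<^sub>k \<xi>\<^sub>k \<zeta>\<^sub>k\<^sup>T\<close> and \<open>\<Sum>\<^sub>k \<xi>\<^sub>k \<xi>\<^sub>k\<^sup>T\<close>, which the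
  symmetry relations express through the \<open>\<Omega>\<close>'s.
\<close>

lemma pd_has_derivative:
  assumes "(f has_derivative f') (at u)"
  shows "pd f i u = f' (axis i 1)"
  using frechet_derivative_at[OF assms] by (simp add: pd_def)

lemma pd_transform_within_open:
  assumes "f differentiable (at u)" "open U" "u \<in> U" "\<And>v. v \<in> U \<Longrightarrow> f v = g v"
  shows "pd f i u = pd g i u"
  using frechet_derivative_transform_within_open[OF assms] by (simp add: pd_def)

lemma pd_diff:
  assumes "f differentiable (at u)" "g differentiable (at u)"
  shows "pd (\<lambda>v. f v - g v) i u = pd f i u - pd g i u"
proof -
  have "((\<lambda>v. f v - g v) has_derivative
      (\<lambda>h. frechet_derivative f (at u) h - frechet_derivative g (at u) h)) (at u)"
    using assms by (intro has_derivative_diff) (simp_all add: frechet_derivative_works)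
  from pd_has_derivative[OF this, of i] show ?thesis by (simp add: pd_def)
qed

lemma bounded_bilinear_matrix_vector_mult:
  "bounded_bilinear ((*v) :: real^'n^'m \<Rightarrow> real^'n \<Rightarrow> real^'m)"
  unfolding bilinear_conv_bounded_bilinear[symmetric] bilinear_def
  by (auto intro!: linearI simp: matrix_vector_right_distrib matrix_vector_mult_add_rdistrib
      matrix_vector_mult_scaleR scaleR_matrix_vector_assoc)

lemma differentiable_matrix_vector_mult:
  fixes A :: "real^'n \<Rightarrow> real^'b^'a" and x :: "real^'n \<Rightarrow> real^'b"
  assumes "A differentiable (at u)" "x differentiable (at u)"
  shows "(\<lambda>v. A v *v x v) differentiable (at u)"
  using bounded_bilinear.FDERIV[OF bounded_bilinear_matrix_vector_mult] assms
  unfolding differentiable_def by blast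

lemma pd_matrix_vector_mult:
  fixes A :: "real^'n \<Rightarrow> real^'b^'a" and x :: "real^'n \<Rightarrow> real^'b"
  assumes "A differentiable (at u)" "x differentiable (at u)"
  shows "pd (\<lambda>v. A v *v x v) i u = A u *v pd x i u + pd A i u *v x u"
proof -
  have "((\<lambda>v. A v *v x v) has_derivative
      (\<lambda>h. A u *v frechet_derivative x (at u) h + frechet_derivative A (at u) h *v x u)) (at u)"
    using bounded_bilinear.FDERIV[OF bounded_bilinear_matrix_vector_mult] assms
    by (simp add: frechet_derivative_works)
  from pd_has_derivative[OF this, of i] show ?thesis by (simp add: pd_def)
qed

lemma smooth_on_imp_differentiable_at:
  assumes "smooth_on U f" "open U" "u \<in> U"
  shows "f differentiable (at u)"
proof -
  have "Ck (Suc 0) U f"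
    using assms(1) unfolding smooth_on_def by blast
  then show ?thesis
    using assms(2,3) by (simp add: differentiable_on_eq_differentiable_at)
qed

lemma differentiable_vec_nth:
  fixes x :: "'c::real_normed_vector \<Rightarrow> 'b::real_normed_vector^'a"
  assumes "x differentiable (at u)"
  shows "(\<lambda>v. x v $ k) differentiable (at u)"
  using differentiable_compose[OF bounded_linear_imp_differentiable[OF bounded_linear_vec_nth] assms] .

lemma differentiable_vec_lambda:
  fixes f :: "'a::finite \<Rightarrow> real^'n \<Rightarrow> real"
  assumes "\<And>k. f k differentiable (at u)"
  shows "(\<lambda>v. \<chi> k. f k v) differentiable (at u)"
proof -
  have "(\<lambda>v. \<chi> k. f k v) = (\<lambda>v. \<Sum>k\<in>UNIV. f k v *\<^sub>R axis k 1)"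
    by (auto simp: vec_eq_iff sum_component axis_def if_distrib sum.delta cong: if_cong)
  then show ?thesis
    using assms by simp
qed

lemma differentiable_prod:
  fixes f :: "'i \<Rightarrow> real^'n \<Rightarrow> real"
  assumes "\<And>k. k \<in> S \<Longrightarrow> f k differentiable (at u)"
  shows "(\<lambda>v. \<Prod>k\<in>S. f k v) differentiable (at u)"
  using has_derivative_prod[of S f, OF assms[unfolded frechet_derivative_works]]
  unfolding differentiable_def by blast

lemma differentiable_det:
  fixes A :: "real^'n \<Rightarrow> real^'m^'m"
  assumes "\<And>r c. (\<lambda>v. A v $ r $ c) differentiable (at u)"
  shows "(\<lambda>v. det (A v)) differentiable (at u)"
  unfolding det_def by (simp add: assms differentiable_prod)

lemma matrix_inv_left: "invertible A \<Longrightarrow> matrix_inv A ** A = mat 1"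
  and matrix_inv_right: "invertible A \<Longrightarrow> A ** matrix_inv A = mat 1"
  unfolding invertible_def matrix_inv_def by (metis (mono_tags, lifting) someI_ex)+

lemma differentiable_matrix_inv_mult:
  fixes A :: "real^'n \<Rightarrow> real^'m^'m" and b :: "real^'n \<Rightarrow> real^'m"
  assumes A: "A differentiable (at u)" and b: "b differentiable (at u)"
    and U: "open U" "u \<in> U" and inv: "\<And>v. v \<in> U \<Longrightarrow> invertible (A v)"
  shows "(\<lambda>v. matrix_inv (A v) *v b v) differentiable (at u)"
proof -
  define cramer where
    "cramer v = (\<chi> k. det (\<chi> r c. if c = k then b v $ r else A v $ r $ c) / det (A v))" for v
  have cramer_eq: "cramer v = matrix_inv (A v) *v b v" if "v \<in> U" for v
  proof -
    have "det (A v) \<noteq> 0"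
      using inv[OF that] by (simp add: invertible_det_nz)
    moreover have "A v *v (matrix_inv (A v) *v b v) = b v"
      using matrix_inv_right[OF inv[OF that]] by (simp add: matrix_vector_mul_assoc)
    ultimately show ?thesis
      by (simp add: cramer_def cramer)
  qed
  have "cramer differentiable (at u)"
  proof -
    have entry: "(\<lambda>v. A v $ r $ c) differentiable (at u)" for r c
      using differentiable_vec_nth[OF differentiable_vec_nth[OF A]] .
    have "(\<lambda>v. det (\<chi> r c. if c = k then b v $ r else A v $ r $ c)) differentiable (at u)" for k
      by (rule differentiable_det, case_tac "c = k") (simp_all add: entry differentiable_vec_nth[OF b])
    moreover have "(\<lambda>v. det (A v)) differentiable (at u)"
      using differentiable_det[OF entry] .
    moreover have "det (A u) \<noteq> 0"
      using inv[OF U(2)] by (simp add: invertible_det_nz)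
    ultimately show ?thesis
      unfolding cramer_def by (auto intro!: differentiable_vec_lambda differentiable_divide)
  qed
  then obtain D where "(cramer has_derivative D) (at u)"
    unfolding differentiable_def by blast
  from has_derivative_transform_within_open[OF this U cramer_eq] show ?thesis
    unfolding differentiable_def by blast
qed

lemma pd_matrix_inv_mult:
  fixes A :: "real^'n \<Rightarrow> real^'m^'m" and b :: "real^'n \<Rightarrow> real^'m"
  assumes A: "A differentiable (at u)" and b: "b differentiable (at u)"
    and U: "open U" "u \<in> U" and inv: "\<And>v. v \<in> U \<Longrightarrow> invertible (A v)"
  shows "pd (\<lambda>v. matrix_inv (A v) *v b v) i u
    = matrix_inv (A u) *v (pd b i u - pd A i u *v (matrix_inv (A u) *v b u))"
proof -
  let ?w = "\<lambda>v. matrix_inv (A v) *v b v"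
  have "pd b i u = pd (\<lambda>v. A v *v ?w v) i u"
    by (rule pd_transform_within_open[OF b U]) (simp add: matrix_vector_mul_assoc matrix_inv_right inv)
  also have "\<dots> = A u *v pd ?w i u + pd A i u *v ?w u"
    using pd_matrix_vector_mult[OF A differentiable_matrix_inv_mult[OF assms]] .
  finally show ?thesis
    by (simp add: matrix_vector_right_distrib matrix_vector_mul_assoc matrix_inv_left inv U)
qed

lemma outer_matrix_vector_mult: "outer a b *v x = (b \<bullet> x) *\<^sub>R a"
  by (simp add: outer_def vec_eq_iff matrix_vector_mult_def inner_vec_def sum_distrib_left
      mult.commute mult.left_commute)

lemma vector_matrix_mult_outer: "x v* outer a b = (x \<bullet> a) *\<^sub>R b"
  by (simp add: outer_def vec_eq_iff vector_matrix_mult_def inner_vec_def sum_distrib_left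
      mult.commute mult.left_commute)

lemma vector_matrix_mult_sum_outer:
  "x v* (\<Sum>k\<in>S. outer (a k) (b k)) = (\<Sum>k\<in>S. (x \<bullet> a k) *\<^sub>R b k)"
  by (induction S rule: infinite_finite_induct)
     (simp_all add: vector_matrix_mult_add_rdistrib vector_matrix_mult_outer)

lemma matrix_vector_mult_sum: "A *v sum f S = (\<Sum>k\<in>S. A *v f k)"
  by (induction S rule: infinite_finite_induct) (simp_all add: matrix_vector_right_distrib)

lemma weighted_sum_transformed_eq:
  fixes \<Omega> P :: "real^'m^'m" and \<Omega>xz :: "real^'l^'m" and \<Omega>zx :: "real^'m^'l"
    and \<xi> :: "'k \<Rightarrow> real^'m" and \<zeta> :: "'k \<Rightarrow> real^'l"
  assumes P: "P ** \<Omega> = mat 1"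
    and sym1: "\<Omega>xz + transpose \<Omega>zx = (\<Sum>k\<in>S. outer (\<xi> k) (\<zeta> k))"
    and sym2: "\<Omega> + transpose \<Omega> = (\<Sum>k\<in>S. outer (\<xi> k) (\<xi> k))"
  shows "(\<Sum>k\<in>S. (s \<bullet> (P *v \<xi> k)) *\<^sub>R (\<zeta> k - \<Omega>zx *v (P *v \<xi> k)))
    = s v* (P ** \<Omega>xz) - \<Omega>zx *v (P *v s)"
proof -
  define t where "t = s v* P"
  have coeff: "s \<bullet> (P *v \<xi> k) = t \<bullet> \<xi> k" for k
    by (simp add: t_def dot_lmul_matrix)
  have "(\<Sum>k\<in>S. (t \<bullet> \<xi> k) *\<^sub>R \<zeta> k) = t v* \<Omega>xz + \<Omega>zx *v t"
    by (simp flip: vector_matrix_mult_sum_outer sym1 add: vector_matrix_mult_add_rdistrib)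
  moreover have "(\<Sum>k\<in>S. (t \<bullet> \<xi> k) *\<^sub>R (\<Omega>zx *v (P *v \<xi> k)))
      = \<Omega>zx *v (\<Sum>k\<in>S. (t \<bullet> \<xi> k) *\<^sub>R (P *v \<xi> k))"
    by (simp add: matrix_vector_mult_sum matrix_vector_mult_scaleR)
  moreover have "(\<Sum>k\<in>S. (t \<bullet> \<xi> k) *\<^sub>R (P *v \<xi> k)) = P *v s + t"
  proof -
    have "(\<Sum>k\<in>S. (t \<bullet> \<xi> k) *\<^sub>R (P *v \<xi> k)) = P *v (t v* (\<Omega> + transpose \<Omega>))"
      by (simp add: sym2 vector_matrix_mult_sum_outer matrix_vector_mult_sum matrix_vector_mult_scaleR)
    also have "\<dots> = P *v s + t"
      by (simp add: t_def vector_matrix_mult_add_rdistrib matrix_vector_right_distrib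
          vector_matrix_mul_assoc matrix_vector_mul_assoc P)
    finally show ?thesis .
  qed
  ultimately show ?thesis
    by (simp add: coeff scaleR_diff_right sum_subtractf matrix_vector_right_distrib t_def
        vector_matrix_mul_assoc)
qed

text \<open>Here \<open>d\<xi>\<close>, \<open>d\<zeta>\<close> and \<open>b k\<close> stand for \<open>\<partial>\<^sub>i \<xi>\<^sub>i\<close>, \<open>\<partial>\<^sub>i \<zeta>\<^sub>i\<close> and \<open>\<beta>\<^sub>k\<^sub>i\<close>.\<close>
lemma starred_transform_identity:
  fixes \<Omega> P :: "real^'m^'m" and \<Omega>xz :: "real^'l^'m" and \<Omega>zx :: "real^'m^'l"
    and \<xi> :: "'k::finite \<Rightarrow> real^'m" and \<zeta> :: "'k \<Rightarrow> real^'l" and b :: "'k \<Rightarrow> real"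
  assumes P: "P ** \<Omega> = mat 1"
    and sym1: "\<Omega>xz + transpose \<Omega>zx = (\<Sum>k\<in>UNIV. outer (\<xi> k) (\<zeta> k))"
    and sym2: "\<Omega> + transpose \<Omega> = (\<Sum>k\<in>UNIV. outer (\<xi> k) (\<xi> k))"
    and s: "s = d\<xi> + (\<Sum>k\<in>UNIV - {i}. b k *\<^sub>R \<xi> k)"
  shows "(d\<zeta> + (\<Sum>k\<in>UNIV - {i}. b k *\<^sub>R \<zeta> k)) - s v* (P ** \<Omega>xz)
    = (d\<zeta> - (\<Omega>zx *v (P *v (d\<xi> - outer (\<xi> i) s *v (P *v \<xi> i))) + outer (\<zeta> i) s *v (P *v \<xi> i)))
      + (\<Sum>k\<in>UNIV - {i}. (b k - s \<bullet> (P *v \<xi> k)) *\<^sub>R (\<zeta> k - \<Omega>zx *v (P *v \<xi> k)))"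
proof -
  define c where "c k = s \<bullet> (P *v \<xi> k)" for k
  define \<eta> where "\<eta> k = \<zeta> k - \<Omega>zx *v (P *v \<xi> k)" for k
  have full: "c i *\<^sub>R \<eta> i + (\<Sum>k\<in>UNIV - {i}. c k *\<^sub>R \<eta> k) = s v* (P ** \<Omega>xz) - \<Omega>zx *v (P *v s)"
    using weighted_sum_transformed_eq[OF P sym1 sym2, of s]
    by (simp add: c_def \<eta>_def sum.remove)
  have d\<xi>: "\<Omega>zx *v (P *v d\<xi>) = \<Omega>zx *v (P *v s) - (\<Sum>k\<in>UNIV - {i}. b k *\<^sub>R (\<Omega>zx *v (P *v \<xi> k)))"
    by (simp add: s matrix_vector_right_distrib matrix_vector_mult_sum matrix_vector_mult_scaleR)
  have sum: "(\<Sum>k\<in>UNIV - {i}. (b k - c k) *\<^sub>R \<eta> k) = (\<Sum>k\<in>UNIV - {i}. b k *\<^sub>R \<zeta> k)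
      - (\<Sum>k\<in>UNIV - {i}. b k *\<^sub>R (\<Omega>zx *v (P *v \<xi> k))) - (\<Sum>k\<in>UNIV - {i}. c k *\<^sub>R \<eta> k)"
    by (simp add: \<eta>_def scaleR_diff_left scaleR_diff_right sum_subtractf)
  have term_i: "\<Omega>zx *v (P *v (d\<xi> - outer (\<xi> i) s *v (P *v \<xi> i))) + outer (\<zeta> i) s *v (P *v \<xi> i)
      = \<Omega>zx *v (P *v d\<xi>) + c i *\<^sub>R \<eta> i"
    by (simp add: c_def \<eta>_def outer_matrix_vector_mult matrix_vector_mult_diff_distrib
        matrix_vector_mult_scaleR scaleR_diff_right)
  show ?thesis
    unfolding c_def[symmetric] \<eta>_def[symmetric] sum term_i d\<xi>
    using full by (simp add: algebra_simps)
qed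

theorem lemma3:
  fixes U :: "(real^'n) set"
    and \<beta> :: "'n \<Rightarrow> 'n \<Rightarrow> real^'n \<Rightarrow> real"
    and \<xi> :: "'n \<Rightarrow> real^'n \<Rightarrow> real^'m"
    and \<zeta> :: "'n \<Rightarrow> real^'n \<Rightarrow> real^'l"
    and \<Omega>xx :: "real^'n \<Rightarrow> real^'m^'m"
    and \<Omega>xz :: "real^'n \<Rightarrow> real^'l^'m"
    and \<Omega>zx :: "real^'n \<Rightarrow> real^'m^'l"
  assumes U_open: "open U"
    and sm_beta: "\<And>i j. i \<noteq> j \<Longrightarrow> smooth_on U (\<beta> i j)"
    and sm_xi: "\<And>i. smooth_on U (\<xi> i)"
    and sm_zeta: "\<And>i. smooth_on U (\<zeta> i)"
    and sm_Oxx: "smooth_on U \<Omega>xx"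
    and sm_Oxz: "smooth_on U \<Omega>xz"
    and sm_Ozx: "smooth_on U \<Omega>zx"
    and lame1: "\<And>i j k u. \<lbrakk>i \<noteq> j; j \<noteq> k; i \<noteq> k; u \<in> U\<rbrakk> \<Longrightarrow>
                  pd (\<beta> i j) k u = \<beta> i k u * \<beta> k j u"
    and lame2: "\<And>i j u. \<lbrakk>i \<noteq> j; u \<in> U\<rbrakk> \<Longrightarrow>
                  pd (\<beta> i j) i u + pd (\<beta> j i) j u
                  + (\<Sum>k\<in>UNIV - {i, j}. \<beta> k i u * \<beta> k j u) = 0"
    and xi_eq: "\<And>i j u. \<lbrakk>i \<noteq> j; u \<in> U\<rbrakk> \<Longrightarrow> pd (\<xi> j) i u = \<beta> j i u *\<^sub>R \<xi> i u"
    and zeta_eq: "\<And>i j u. \<lbrakk>i \<noteq> j; u \<in> U\<rbrakk> \<Longrightarrow> pd (\<zeta> j) i u = \<beta> j i u *\<^sub>R \<zeta> i u"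
    and dOxx: "\<And>i u. u \<in> U \<Longrightarrow> pd \<Omega>xx i u = outer (\<xi> i u) (starv \<beta> \<xi> i u)"
    and dOxz: "\<And>i u. u \<in> U \<Longrightarrow> pd \<Omega>xz i u = outer (\<xi> i u) (starv \<beta> \<zeta> i u)"
    and dOzx: "\<And>i u. u \<in> U \<Longrightarrow> pd \<Omega>zx i u = outer (\<zeta> i u) (starv \<beta> \<xi> i u)"
    and inv: "\<And>u. u \<in> U \<Longrightarrow> invertible (\<Omega>xx u)"
    and sym1: "\<And>u. u \<in> U \<Longrightarrow> \<Omega>xz u + transpose (\<Omega>zx u) = (\<Sum>k\<in>UNIV. outer (\<xi> k u) (\<zeta> k u))"
    and sym2: "\<And>u. u \<in> U \<Longrightarrow> \<Omega>xx u + transpose (\<Omega>xx u) = (\<Sum>k\<in>UNIV. outer (\<xi> k u) (\<xi> k u))"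
  defines "h\<beta> \<equiv> \<lambda>i j u. \<beta> i j u - starv \<beta> \<xi> j u \<bullet> (matrix_inv (\<Omega>xx u) *v \<xi> i u)"
    and "h\<zeta> \<equiv> \<lambda>i u. \<zeta> i u - \<Omega>zx u *v (matrix_inv (\<Omega>xx u) *v \<xi> i u)"
    and "h\<zeta>s \<equiv> \<lambda>i u. starv \<beta> \<zeta> i u - starv \<beta> \<xi> i u v* (matrix_inv (\<Omega>xx u) ** \<Omega>xz u)"
  shows "\<forall>i. \<forall>u\<in>U. h\<zeta>s i u = pd (h\<zeta> i) i u + (\<Sum>k\<in>UNIV - {i}. h\<beta> k i u *\<^sub>R h\<zeta> k u)"
proof (intro allI ballI)
  fix i u
  assume u: "u \<in> U"
  let ?P = "matrix_inv (\<Omega>xx u)"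
  let ?w = "\<lambda>v. matrix_inv (\<Omega>xx v) *v \<xi> i v"
  have diff: "\<Omega>xx differentiable (at u)" "\<Omega>zx differentiable (at u)"
      "\<xi> i differentiable (at u)" "\<zeta> i differentiable (at u)"
    using sm_Oxx sm_Ozx sm_xi[of i] sm_zeta[of i] by (simp_all add: smooth_on_imp_differentiable_at U_open u)
  have w: "?w differentiable (at u)"
    using differentiable_matrix_inv_mult[OF diff(1,3) U_open u inv] .
  have "pd (h\<zeta> i) i u = pd (\<zeta> i) i u - (\<Omega>zx u *v pd ?w i u + pd \<Omega>zx i u *v ?w u)"
    unfolding h\<zeta>_def
    using pd_diff[OF diff(4) differentiable_matrix_vector_mult[OF diff(2) w]] pd_matrix_vector_mult[OF diff(2) w]
    by simp
  moreover have "pd ?w i u = ?P *v (pd (\<xi> i) i u - pd \<Omega>xx i u *v (?P *v \<xi> i u))"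
    using pd_matrix_inv_mult[OF diff(1,3) U_open u inv] .
  ultimately show "h\<zeta>s i u = pd (h\<zeta> i) i u + (\<Sum>k\<in>UNIV - {i}. h\<beta> k i u *\<^sub>R h\<zeta> k u)"
    using starred_transform_identity[OF matrix_inv_left[OF inv[OF u]] sym1[OF u] sym2[OF u],
        of "starv \<beta> \<xi> i u" "pd (\<xi> i) i u" "\<lambda>k. \<beta> k i u" i "pd (\<zeta> i) i u"]
    by (simp add: h\<zeta>s_def h\<beta>_def h\<zeta>_def starv_def dOxx dOzx u)
qed

end
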